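(* Let $\mathbb{F}$ be a field with $\operatorname{char}(\mathbb{F})\neq 2$ and let $G$ be a non-abelian group with a group involution $\ast$ and a non-identity orientation $\sigma:G\to\{\pm1\}$ such that $gg^\ast\in\ker\sigma$ for all $g\in G$. Then $\mathbb{F}G$ is normal with respect to the oriented involution $\circledast$ if and only if $\mathbb{F}G^+$ is commutative.
   Context: A group involution on $G$ is a map $\ast:G\to G$ with $(gh)^\ast=h^\ast g^\ast$ and $(g^\ast)^\ast=g$. An orientation is a group homomorphism $\sigma:G\to\{\pm1\}$. The oriented involution is $(\sum_g\alpha_g g)^\circledast=\sum_g\alpha_g\sigma(g)g^\ast$ on $\mathbb{F}G$. $\mathbb{F}G$ is normal if $\alpha\alpha^\circledast=\alpha^\circledast\alpha$ for all $\alpha\in\mathbb{F}G$. $\mathbb{F}G^+=\{\alpha\in\mathbb{F}G:\alpha^\circledast=\alpha\}$ is the set of symmetric elements under $\circledast$. *)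

theory Defs
  imports "HOL-Algebra.Group"
begin

text \<open>Group algebra FG over a field 'f (type class) of a group G (HOL-Algebra locale),
 elements are finitely supported coefficient functions on carrier G (zero outside).\<close>

definition grp_alg :: "('g, 'b) monoid_scheme \<Rightarrow> ('g \<Rightarrow> 'f::field) set" where
  "grp_alg G = {a. (\<forall>g. g \<notin> carrier G \<longrightarrow> a g = 0) \<and> finite {g. a g \<noteq> 0}}"

definition grp_alg_mult :: "('g, 'b) monoid_scheme \<Rightarrow> ('g \<Rightarrow> 'f::field) \<Rightarrow> ('g \<Rightarrow> 'f) \<Rightarrow> ('g \<Rightarrow> 'f)" where
  "grp_alg_mult G a b = (\<lambda>x. if x \<in> carrier G then
      (\<Sum>g\<in>{g \<in> carrier G. a g \<noteq> 0}. a g * b (inv\<^bsub>G\<^esub> g \<otimes>\<^bsub>G\<^esub> x)) else 0)"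

definition group_involution :: "('g, 'b) monoid_scheme \<Rightarrow> ('g \<Rightarrow> 'g) \<Rightarrow> bool" where
  "group_involution G s \<longleftrightarrow> (\<forall>g\<in>carrier G. s g \<in> carrier G) \<and>
     (\<forall>g\<in>carrier G. \<forall>h\<in>carrier G. s (g \<otimes>\<^bsub>G\<^esub> h) = s h \<otimes>\<^bsub>G\<^esub> s g) \<and>
     (\<forall>g\<in>carrier G. s (s g) = g)"

definition orientation :: "('g, 'b) monoid_scheme \<Rightarrow> ('g \<Rightarrow> int) \<Rightarrow> bool" where
  "orientation G \<sigma> \<longleftrightarrow> (\<forall>g\<in>carrier G. \<sigma> g \<in> {1, -1}) \<and>
     (\<forall>g\<in>carrier G. \<forall>h\<in>carrier G. \<sigma> (g \<otimes>\<^bsub>G\<^esub> h) = \<sigma> g * \<sigma> h)"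

text \<open>Oriented involution: (\<Sum> a_g g)^\<circledast> = \<Sum> a_g \<sigma>(g) g^*; its coefficient at x is
  a(x^*) \<sigma>(x^*) since * is a bijection of G.\<close>
definition oriented_inv :: "('g, 'b) monoid_scheme \<Rightarrow> ('g \<Rightarrow> 'g) \<Rightarrow> ('g \<Rightarrow> int) \<Rightarrow> ('g \<Rightarrow> 'f::field) \<Rightarrow> ('g \<Rightarrow> 'f)" where
  "oriented_inv G s \<sigma> a = (\<lambda>x. if x \<in> carrier G then of_int (\<sigma> (s x)) * a (s x) else 0)"

definition grp_alg_normal :: "('g, 'b) monoid_scheme \<Rightarrow> ('g \<Rightarrow> 'g) \<Rightarrow> ('g \<Rightarrow> int) \<Rightarrow> ('f::field) itself \<Rightarrow> bool" where
  "grp_alg_normal G s \<sigma> _ \<longleftrightarrow> (\<forall>a \<in> (grp_alg G :: ('g \<Rightarrow> 'f) set).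
      grp_alg_mult G a (oriented_inv G s \<sigma> a) = grp_alg_mult G (oriented_inv G s \<sigma> a) a)"

definition sym_elems :: "('g, 'b) monoid_scheme \<Rightarrow> ('g \<Rightarrow> 'g) \<Rightarrow> ('g \<Rightarrow> int) \<Rightarrow> ('g \<Rightarrow> 'f::field) set" where
  "sym_elems G s \<sigma> = {a \<in> grp_alg G. oriented_inv G s \<sigma> a = a}"

definition sym_commutative :: "('g, 'b) monoid_scheme \<Rightarrow> ('g \<Rightarrow> 'g) \<Rightarrow> ('g \<Rightarrow> int) \<Rightarrow> ('f::field) itself \<Rightarrow> bool" where
  "sym_commutative G s \<sigma> _ \<longleftrightarrow> (\<forall>a \<in> (sym_elems G s \<sigma> :: ('g \<Rightarrow> 'f) set). \<forall>b \<in> sym_elems G s \<sigma>.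
      grp_alg_mult G a b = grp_alg_mult G b a)"

end

theory Submission
  imports Defs
begin

text \<open>Both conditions are equivalent to a purely group-theoretic one: for all g and y, either g and y
  commute, or \<sigma>(g) = 1 and gy = yg*, or \<sigma>(g) = -1 and g* = g.
  Under this condition the coefficients of a symmetric element \<alpha>, i.e. \<alpha>(x) = \<sigma>(x)\<alpha>(x*), satisfy
  \<alpha>(yw) = \<alpha>(wy), so \<alpha> is central. Hence FG+ is commutative, and FG is normal because
  \<alpha>\<circledast> = (\<alpha> + \<alpha>\<circledast>) - \<alpha> commutes with \<alpha>.
  Conversely, comparing coefficients in products of the elements g + \<sigma>(g)g* (respectively of
  g + h with its image under \<circledast>) and using char F \<noteq> 2 shows first that every u = u* with
  \<sigma>(u) = 1 is central, in particular every gg*, and then that each pair g, y falls into one of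
  the three cases.\<close>

lemma two_neq_zero_if_CHAR_neq_2:
  assumes "CHAR('a::comm_ring_1) \<noteq> 2"
  shows "(2::'a) \<noteq> 0"
proof
  assume "(2::'a) = 0"
  then have "CHAR('a) = 2"
    by (intro CHAR_eq_posI) (auto simp: less_2_cases_iff)
  with assms show False ..
qed

lemma small_numerals_distinct_if_two_neq_zero:
  assumes two: "(2::'f::field) \<noteq> 0"
  shows "(4::'f) \<noteq> 0" "(2::'f) \<noteq> 4" "(4::'f) \<noteq> 2" "(1::'f) \<noteq> -1" "(-1::'f) \<noteq> 1"
    "(2::'f) \<noteq> -2" "(-2::'f) \<noteq> 2" "(0::'f) \<noteq> 2" "(0::'f) \<noteq> 4" "(2::'f) \<noteq> 1" "(1::'f) \<noteq> 2"
    "(4::'f) \<noteq> -4" "(-4::'f) \<noteq> 4" "(-2::'f) \<noteq> 0" "(-4::'f) \<noteq> 0" "(0::'f) \<noteq> -2" "(0::'f) \<noteq> -4"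
    "(1::'f) + 1 \<noteq> 0" "(-1::'f) - 1 \<noteq> 0"
proof -
  have four: "(4::'f) \<noteq> 0" using two by (metis mult_eq_0_iff numeral_Bit0_eq_double)
  have eight: "(8::'f) \<noteq> 0" using four by (metis mult_eq_0_iff numeral_Bit0_eq_double)
  have neq: "a - b \<noteq> 0 \<Longrightarrow> a \<noteq> b" for a b :: 'f by auto
  show "(4::'f) \<noteq> 0" "(2::'f) \<noteq> 4" "(4::'f) \<noteq> 2" "(1::'f) \<noteq> -1" "(-1::'f) \<noteq> 1"
    "(2::'f) \<noteq> -2" "(-2::'f) \<noteq> 2" "(0::'f) \<noteq> 2" "(0::'f) \<noteq> 4" "(2::'f) \<noteq> 1" "(1::'f) \<noteq> 2"
    "(4::'f) \<noteq> -4" "(-4::'f) \<noteq> 4" "(-2::'f) \<noteq> 0" "(-4::'f) \<noteq> 0" "(0::'f) \<noteq> -2" "(0::'f) \<noteq> -4"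
    "(1::'f) + 1 \<noteq> 0" "(-1::'f) - 1 \<noteq> 0"
    by (rule neq, use two four eight in simp)+
qed

context group begin

lemma assoc_right_cancel:
  assumes "a \<in> carrier G" "b \<in> carrier G" "c \<in> carrier G" "d \<in> carrier G" "e \<in> carrier G"
    "f \<in> carrier G" "u \<in> carrier G"
  shows "a \<otimes> (b \<otimes> u) = c \<otimes> (d \<otimes> u) \<longleftrightarrow> a \<otimes> b = c \<otimes> d"
    and "a \<otimes> (b \<otimes> u) = c \<otimes> u \<longleftrightarrow> a \<otimes> b = c"
    and "a \<otimes> u = c \<otimes> (d \<otimes> u) \<longleftrightarrow> a = c \<otimes> d"
    and "a \<otimes> (b \<otimes> (e \<otimes> u)) = c \<otimes> (d \<otimes> u) \<longleftrightarrow> a \<otimes> (b \<otimes> e) = c \<otimes> d"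
    and "c \<otimes> (d \<otimes> u) = a \<otimes> (b \<otimes> (e \<otimes> u)) \<longleftrightarrow> c \<otimes> d = a \<otimes> (b \<otimes> e)"
    and "a \<otimes> (b \<otimes> (e \<otimes> u)) = c \<otimes> (d \<otimes> (f \<otimes> u)) \<longleftrightarrow> a \<otimes> (b \<otimes> e) = c \<otimes> (d \<otimes> f)"
    and "a \<otimes> (b \<otimes> (e \<otimes> u)) = c \<otimes> u \<longleftrightarrow> a \<otimes> (b \<otimes> e) = c"
    and "c \<otimes> u = a \<otimes> (b \<otimes> (e \<otimes> u)) \<longleftrightarrow> c = a \<otimes> (b \<otimes> e)"
  using assms by (simp_all add: m_assoc[symmetric])

end

section \<open>Multiplication in the group algebra\<close>

definition two_term :: "'f \<Rightarrow> 'g \<Rightarrow> 'f \<Rightarrow> 'g \<Rightarrow> 'g \<Rightarrow> 'f::field" where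
  "two_term c g d h = (\<lambda>x. c * of_bool (x = g) + d * of_bool (x = h))"

lemma two_term_swap: "two_term c g d h = two_term d h c g"
  unfolding two_term_def by (rule ext) simp

context group begin

lemma grp_alg_finite_support: "a \<in> grp_alg G \<Longrightarrow> finite {g \<in> carrier G. a g \<noteq> 0}"
  unfolding grp_alg_def by (auto intro: finite_subset)

lemma grp_alg_diff:
  assumes "a \<in> grp_alg G" "b \<in> grp_alg G"
  shows "(\<lambda>x. a x - b x) \<in> grp_alg G"
proof -
  have "{g. a g - b g \<noteq> 0} \<subseteq> {g. a g \<noteq> 0} \<union> {g. b g \<noteq> 0}" by auto
  then show ?thesis using assms unfolding grp_alg_def by (auto intro: finite_subset)
qed

lemma grp_alg_add:
  assumes "a \<in> grp_alg G" "b \<in> grp_alg G"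
  shows "(\<lambda>x. a x + b x) \<in> grp_alg G"
proof -
  have "{g. a g + b g \<noteq> 0} \<subseteq> {g. a g \<noteq> 0} \<union> {g. b g \<noteq> 0}" by auto
  then show ?thesis using assms unfolding grp_alg_def by (auto intro: finite_subset)
qed

lemma grp_alg_mult_eq_sum:
  assumes "a \<in> grp_alg G" "finite F" "{g \<in> carrier G. a g \<noteq> 0} \<subseteq> F" "F \<subseteq> carrier G"
  shows "grp_alg_mult G a b x = (if x \<in> carrier G then (\<Sum>g\<in>F. a g * b (inv g \<otimes> x)) else 0)"
proof -
  have "(\<Sum>g\<in>{g \<in> carrier G. a g \<noteq> 0}. a g * b (inv g \<otimes> x)) = (\<Sum>g\<in>F. a g * b (inv g \<otimes> x))"
    by (rule sum.mono_neutral_left) (use assms in auto)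
  then show ?thesis unfolding grp_alg_mult_def by simp
qed

lemma grp_alg_mult_diff_right:
  "grp_alg_mult G a (\<lambda>x. b x - c x) = (\<lambda>x. grp_alg_mult G a b x - grp_alg_mult G a c x)"
  unfolding grp_alg_mult_def by (rule ext) (simp add: algebra_simps sum_subtractf)

lemma grp_alg_mult_diff_left:
  assumes a: "a \<in> grp_alg G" and b: "b \<in> grp_alg G"
  shows "grp_alg_mult G (\<lambda>x. a x - b x) c = (\<lambda>x. grp_alg_mult G a c x - grp_alg_mult G b c x)"
proof
  fix x
  define F where "F = {g \<in> carrier G. a g \<noteq> 0} \<union> {g \<in> carrier G. b g \<noteq> 0}"
  have F: "finite F" "F \<subseteq> carrier G"
    unfolding F_def using grp_alg_finite_support[OF a] grp_alg_finite_support[OF b] by auto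
  have "grp_alg_mult G (\<lambda>x. a x - b x) c x =
      (if x \<in> carrier G then (\<Sum>g\<in>F. (a g - b g) * c (inv g \<otimes> x)) else 0)"
    by (rule grp_alg_mult_eq_sum[OF grp_alg_diff[OF a b] F(1) _ F(2)]) (auto simp: F_def)
  moreover have "grp_alg_mult G a c x = (if x \<in> carrier G then (\<Sum>g\<in>F. a g * c (inv g \<otimes> x)) else 0)"
    by (rule grp_alg_mult_eq_sum[OF a F(1) _ F(2)]) (auto simp: F_def)
  moreover have "grp_alg_mult G b c x = (if x \<in> carrier G then (\<Sum>g\<in>F. b g * c (inv g \<otimes> x)) else 0)"
    by (rule grp_alg_mult_eq_sum[OF b F(1) _ F(2)]) (auto simp: F_def)
  ultimately show "grp_alg_mult G (\<lambda>x. a x - b x) c x = grp_alg_mult G a c x - grp_alg_mult G b c x"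
    by (simp add: algebra_simps sum_subtractf)
qed

text \<open>Reindex the convolution sum by h \<mapsto> x h\<inverse>.\<close>

lemma grp_alg_mult_comm_class_function:
  assumes a: "a \<in> grp_alg G" and b: "b \<in> grp_alg G"
    and class_fun: "\<And>w y. w \<in> carrier G \<Longrightarrow> y \<in> carrier G \<Longrightarrow> a (y \<otimes> w) = a (w \<otimes> y)"
  shows "grp_alg_mult G a b = grp_alg_mult G b a"
proof
  fix x
  show "grp_alg_mult G a b x = grp_alg_mult G b a x"
  proof (cases "x \<in> carrier G")
    case False
    then show ?thesis unfolding grp_alg_mult_def by simp
  next
    case x: True
    define Sa where "Sa = {g \<in> carrier G. a g \<noteq> 0}"
    define Sb where "Sb = {g \<in> carrier G. b g \<noteq> 0}"
    define \<phi> where "\<phi> = (\<lambda>h. x \<otimes> inv h)"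
    define F where "F = Sa \<union> \<phi> ` Sb"
    have Sb: "finite Sb" "Sb \<subseteq> carrier G"
      using grp_alg_finite_support[OF b] unfolding Sb_def by auto
    have F: "finite F" "F \<subseteq> carrier G"
      using grp_alg_finite_support[OF a] Sb x unfolding F_def Sa_def \<phi>_def by auto
    have \<phi>_inv: "inv (\<phi> h) \<otimes> x = h" if "h \<in> carrier G" for h
      using that x unfolding \<phi>_def by (simp add: inv_mult_group m_assoc)
    have inj: "inj_on \<phi> Sb"
      by (rule inj_on_inverseI[where g = "\<lambda>g. inv g \<otimes> x"]) (use Sb(2) \<phi>_inv in auto)
    have "grp_alg_mult G b a x = (\<Sum>h\<in>Sb. b h * a (inv h \<otimes> x))"
      unfolding grp_alg_mult_def Sb_def using x by simp
    also have "\<dots> = (\<Sum>h\<in>Sb. a (\<phi> h) * b (inv (\<phi> h) \<otimes> x))"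
      using Sb(2) x \<phi>_inv class_fun unfolding \<phi>_def by (intro sum.cong) auto
    also have "\<dots> = (\<Sum>g\<in>\<phi> ` Sb. a g * b (inv g \<otimes> x))"
      by (simp add: sum.reindex[OF inj])
    also have "\<dots> = (\<Sum>g\<in>F. a g * b (inv g \<otimes> x))"
    proof (rule sum.mono_neutral_left[OF F(1)])
      show "\<phi> ` Sb \<subseteq> F" unfolding F_def by auto
      show "\<forall>g\<in>F - \<phi> ` Sb. a g * b (inv g \<otimes> x) = 0"
      proof
        fix g assume g: "g \<in> F - \<phi> ` Sb"
        then have "g \<in> carrier G" using F(2) by auto
        then have "\<phi> (inv g \<otimes> x) = g" using x unfolding \<phi>_def
          by (simp add: inv_mult_group m_assoc[symmetric])
        then have "inv g \<otimes> x \<notin> Sb" using g by force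
        then show "a g * b (inv g \<otimes> x) = 0" using \<open>g \<in> carrier G\<close> x unfolding Sb_def by simp
      qed
    qed
    also have "\<dots> = grp_alg_mult G a b x"
      using grp_alg_mult_eq_sum[OF a F(1) _ F(2)] x unfolding F_def Sa_def by auto
    finally show ?thesis by simp
  qed
qed

lemma two_term_in_grp_alg: "g \<in> carrier G \<Longrightarrow> h \<in> carrier G \<Longrightarrow> two_term c g d h \<in> grp_alg G"
proof -
  assume "g \<in> carrier G" "h \<in> carrier G"
  moreover have "finite {x. two_term c g d h x \<noteq> 0}"
    by (rule finite_subset[of _ "{g, h}"]) (auto simp: two_term_def)
  ultimately show ?thesis unfolding grp_alg_def by (auto simp: two_term_def)
qed

lemma two_term_mult:
  assumes "g \<in> carrier G" "h \<in> carrier G"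
  shows "grp_alg_mult G (two_term c g d h) b x =
     (if x \<in> carrier G then c * b (inv g \<otimes> x) + d * b (inv h \<otimes> x) else 0)"
proof -
  have "grp_alg_mult G (two_term c g d h) b x = (if x \<in> carrier G then
      (\<Sum>k\<in>{g, h}. two_term c g d h k * b (inv k \<otimes> x)) else 0)"
    by (rule grp_alg_mult_eq_sum) (use assms two_term_in_grp_alg in \<open>auto simp: two_term_def\<close>)
  then show ?thesis by (cases "g = h") (simp_all add: two_term_def algebra_simps)
qed

lemma two_term_mult_two_term:
  assumes "g \<in> carrier G" "h \<in> carrier G" "g' \<in> carrier G" "h' \<in> carrier G" "x \<in> carrier G"
  shows "grp_alg_mult G (two_term c g d h) (two_term c' g' d' h') x =
     c * c' * of_bool (x = g \<otimes> g') + c * d' * of_bool (x = g \<otimes> h') +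
     d * c' * of_bool (x = h \<otimes> g') + d * d' * of_bool (x = h \<otimes> h')"
  unfolding two_term_mult[OF assms(1,2)] using assms
  by (simp add: two_term_def inv_solve_left' algebra_simps)

end

section \<open>Groups with an oriented involution\<close>

locale oriented_group = group G for G (structure) +
  fixes s :: "'a \<Rightarrow> 'a" and \<sigma> :: "'a \<Rightarrow> int"
  assumes involution: "group_involution G s"
    and orientation: "orientation G \<sigma>"
    and orientation_mult_star: "\<And>g. g \<in> carrier G \<Longrightarrow> \<sigma> (g \<otimes> s g) = 1"
begin

lemma star_closed [simp]: "g \<in> carrier G \<Longrightarrow> s g \<in> carrier G"
  using involution unfolding group_involution_def by blast

lemma star_mult: "g \<in> carrier G \<Longrightarrow> h \<in> carrier G \<Longrightarrow> s (g \<otimes> h) = s h \<otimes> s g"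
  using involution unfolding group_involution_def by blast

lemma star_star [simp]: "g \<in> carrier G \<Longrightarrow> s (s g) = g"
  using involution unfolding group_involution_def by blast

lemma star_eq_iff [simp]: "g \<in> carrier G \<Longrightarrow> h \<in> carrier G \<Longrightarrow> s g = s h \<longleftrightarrow> g = h"
  by (metis star_star)

lemma orientation_mult: "g \<in> carrier G \<Longrightarrow> h \<in> carrier G \<Longrightarrow> \<sigma> (g \<otimes> h) = \<sigma> g * \<sigma> h"
  using orientation unfolding orientation_def by blast

lemma orientation_cases: "g \<in> carrier G \<Longrightarrow> \<sigma> g = 1 \<or> \<sigma> g = -1"
  using orientation unfolding orientation_def by blast

lemma orientation_star [simp]: "g \<in> carrier G \<Longrightarrow> \<sigma> (s g) = \<sigma> g"
  using orientation_mult[of g "s g"] orientation_mult_star orientation_cases[of g]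
    orientation_cases[of "s g"] by fastforce

lemma of_int_orientation_square [simp]:
  "g \<in> carrier G \<Longrightarrow> of_int (\<sigma> g) * (of_int (\<sigma> g) :: 'f::ring_1) = 1"
  using orientation_cases[of g] by auto

lemma oriented_inv_apply: "x \<in> carrier G \<Longrightarrow> oriented_inv G s \<sigma> a x = of_int (\<sigma> x) * a (s x)"
  unfolding oriented_inv_def by simp

lemma oriented_inv_in_grp_alg: "a \<in> grp_alg G \<Longrightarrow> oriented_inv G s \<sigma> a \<in> grp_alg G"
proof -
  assume a: "a \<in> grp_alg G"
  have "{x. oriented_inv G s \<sigma> a x \<noteq> 0} \<subseteq> s ` {y. a y \<noteq> 0}"
  proof
    fix x assume "x \<in> {x. oriented_inv G s \<sigma> a x \<noteq> 0}"
    then have "x \<in> carrier G" "a (s x) \<noteq> 0" unfolding oriented_inv_def by (auto split: if_splits)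
    then show "x \<in> s ` {y. a y \<noteq> 0}" by (auto intro: rev_image_eqI[of "s x"])
  qed
  moreover have "finite (s ` {y. a y \<noteq> 0})" using a unfolding grp_alg_def by auto
  ultimately have "finite {x. oriented_inv G s \<sigma> a x \<noteq> 0}" by (rule finite_subset)
  then show ?thesis unfolding grp_alg_def by (simp add: oriented_inv_def)
qed

lemma sym_elems_apply: "a \<in> sym_elems G s \<sigma> \<Longrightarrow> x \<in> carrier G \<Longrightarrow> a x = of_int (\<sigma> x) * a (s x)"
  unfolding sym_elems_def by (metis (mono_tags, lifting) mem_Collect_eq oriented_inv_apply)

lemma oriented_inv_two_term:
  assumes "g \<in> carrier G" "h \<in> carrier G"
  shows "oriented_inv G s \<sigma> (two_term c g d h) =
    two_term (c * of_int (\<sigma> g)) (s g) (d * of_int (\<sigma> h)) (s h)"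
proof
  fix x
  have "s x = g \<longleftrightarrow> x = s g" "s x = h \<longleftrightarrow> x = s h" if "x \<in> carrier G"
    using that assms by auto
  then show "oriented_inv G s \<sigma> (two_term c g d h) x =
      two_term (c * of_int (\<sigma> g)) (s g) (d * of_int (\<sigma> h)) (s h) x"
    using assms unfolding oriented_inv_def two_term_def by (auto simp: algebra_simps)
qed

definition sym_basis :: "'a \<Rightarrow> 'a \<Rightarrow> 'f::field" where
  "sym_basis g = two_term 1 g (of_int (\<sigma> g)) (s g)"

lemma sym_basis_in_sym_elems: "g \<in> carrier G \<Longrightarrow> sym_basis g \<in> sym_elems G s \<sigma>"
  unfolding sym_elems_def sym_basis_def
  by (simp add: two_term_in_grp_alg oriented_inv_two_term two_term_swap)

lemma sym_commutative_coeff: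
  assumes C: "sym_commutative G s \<sigma> TYPE('f::field)"
    and g: "g \<in> carrier G" and h: "h \<in> carrier G" and x: "x \<in> carrier G"
  shows "of_bool (x = g \<otimes> h) + of_int (\<sigma> h) * of_bool (x = g \<otimes> s h)
       + of_int (\<sigma> g) * of_bool (x = s g \<otimes> h) + of_int (\<sigma> g) * of_int (\<sigma> h) * of_bool (x = s g \<otimes> s h) =
     of_bool (x = h \<otimes> g) + of_int (\<sigma> g) * of_bool (x = h \<otimes> s g)
       + of_int (\<sigma> h) * of_bool (x = s h \<otimes> g) + of_int (\<sigma> g) * of_int (\<sigma> h) * (of_bool (x = s h \<otimes> s g) :: 'f)"
proof -
  have "grp_alg_mult G (sym_basis g :: 'a \<Rightarrow> 'f) (sym_basis h) x = grp_alg_mult G (sym_basis h) (sym_basis g) x"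
    using C sym_basis_in_sym_elems[OF g] sym_basis_in_sym_elems[OF h] unfolding sym_commutative_def by metis
  then show ?thesis
    using g h x unfolding sym_basis_def by (simp only: two_term_mult_two_term star_closed) (simp add: mult_ac)
qed

lemma grp_alg_normal_two_term:
  assumes N: "grp_alg_normal G s \<sigma> TYPE('f::field)" and g: "g \<in> carrier G" and h: "h \<in> carrier G"
  shows "grp_alg_mult G (two_term (c::'f) g d h) (oriented_inv G s \<sigma> (two_term c g d h)) x =
         grp_alg_mult G (oriented_inv G s \<sigma> (two_term c g d h)) (two_term c g d h) x"
  using N two_term_in_grp_alg[OF g h] unfolding grp_alg_normal_def by metis

lemma grp_alg_normal_star_commute:
  assumes N: "grp_alg_normal G s \<sigma> TYPE('f::field)" and g: "g \<in> carrier G"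
  shows "g \<otimes> s g = s g \<otimes> g"
proof -
  have "of_int (\<sigma> g) = (of_int (\<sigma> g) * of_bool (g \<otimes> s g = s g \<otimes> g) :: 'f)"
    using grp_alg_normal_two_term[OF N g g, of 1 0 "g \<otimes> s g"] g
    by (simp add: oriented_inv_two_term two_term_mult_two_term)
  moreover have "(of_int (\<sigma> g) :: 'f) \<noteq> 0" using orientation_cases[OF g] by auto
  ultimately show ?thesis by (cases "g \<otimes> s g = s g \<otimes> g") auto
qed

lemma grp_alg_normal_coeff:
  assumes N: "grp_alg_normal G s \<sigma> TYPE('f::field)"
    and g: "g \<in> carrier G" and h: "h \<in> carrier G" and x: "x \<in> carrier G"
  shows "of_int (\<sigma> h) * of_bool (x = g \<otimes> s h) + of_int (\<sigma> g) * of_bool (x = h \<otimes> s g) =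
         (of_int (\<sigma> g) * of_bool (x = s g \<otimes> h) + of_int (\<sigma> h) * of_bool (x = s h \<otimes> g) :: 'f)"
  using grp_alg_normal_two_term[OF N g h, of 1 1 x] g h x
    grp_alg_normal_star_commute[OF N g] grp_alg_normal_star_commute[OF N h]
  by (simp add: oriented_inv_two_term two_term_mult_two_term algebra_simps)

end

section \<open>From the group algebra to the group\<close>

context oriented_group begin

definition fixed_points_central :: bool where
  "fixed_points_central \<longleftrightarrow>
     (\<forall>u\<in>carrier G. \<sigma> u = 1 \<longrightarrow> s u = u \<longrightarrow> (\<forall>y\<in>carrier G. u \<otimes> y = y \<otimes> u))"

text \<open>For u = u* with \<sigma>(u) = 1 the symmetric element u + \<sigma>(u)u* is 2u; compare its products with
  y + \<sigma>(y)y* at uy and with uy + \<sigma>(uy)(uy)* at u(uy).\<close>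

lemma sym_commutative_fixed_points_central:
  assumes C: "sym_commutative G s \<sigma> TYPE('f::field)" and two: "(2::'f) \<noteq> 0"
  shows fixed_points_central
  unfolding fixed_points_central_def
proof (intro ballI impI)
  fix u y assume u: "u \<in> carrier G" and sigu: "\<sigma> u = 1" and su: "s u = u" and y: "y \<in> carrier G"
  show "u \<otimes> y = y \<otimes> u"
  proof (rule ccontr)
    assume nc: "u \<otimes> y \<noteq> y \<otimes> u"
    note numerals = small_numerals_distinct_if_two_neq_zero[OF two]
    note E1 = sym_commutative_coeff[OF C u y m_closed[OF u y]]
    note E2 = sym_commutative_coeff[OF C u m_closed[OF u y] m_closed[OF u m_closed[OF u y]]]
    have suy: "s (u \<otimes> y) = s y \<otimes> u" using star_mult[OF u y] su by simp
    have siguy: "\<sigma> (u \<otimes> y) = \<sigma> y" using orientation_mult[OF u y] sigu by simp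
    have E1': "(2::'f) * (of_int (\<sigma> y) * of_bool (y = s y)) + 2 = 2 * (of_int (\<sigma> y) * of_bool (u \<otimes> y = s y \<otimes> u))"
      using E1 nc u y su sigu by (simp add: m_assoc)
    show False
    proof (cases "\<sigma> y = 1")
      case True
      have ne: "y \<noteq> s y" and swap: "u \<otimes> y = s y \<otimes> u" using E1' True numerals two
        by (auto simp: of_bool_def split: if_splits)
      have no_swap: "u \<otimes> (s y \<otimes> u) \<noteq> s y \<otimes> (u \<otimes> u)"
      proof
        assume "u \<otimes> (s y \<otimes> u) = s y \<otimes> (u \<otimes> u)"
        then have "u \<otimes> (u \<otimes> y) = s y \<otimes> (u \<otimes> u)" using swap by simp
        also have "\<dots> = u \<otimes> (y \<otimes> u)" using swap u y by (simp add: m_assoc[symmetric])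
        finally have "s y \<otimes> u = y \<otimes> u" using swap u y by simp
        then show False using ne u y by simp
      qed
      show False using E2 nc u y su sigu suy siguy True numerals ne swap no_swap
        by (simp add: m_assoc)
    next
      case False
      then have F: "\<sigma> y = -1" using orientation_cases[OF y] by auto
      have "y = s y" "u \<otimes> y \<noteq> s y \<otimes> u" using E1' F nc numerals two
        by (auto simp: of_bool_def split: if_splits)
      then show False using E2 nc u y su sigu suy siguy F numerals
        by (simp add: m_assoc) (simp add: of_bool_def split: if_splits)
    qed
  qed
qed

text \<open>Normality applied to u + y at the coefficient uy, and to u + uy at the coefficient (uy)u.\<close>

lemma grp_alg_normal_fixed_points_central:
  assumes N: "grp_alg_normal G s \<sigma> TYPE('f::field)" and two: "(2::'f) \<noteq> 0"
  shows fixed_points_central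
  unfolding fixed_points_central_def
proof (intro ballI impI)
  fix u y assume u: "u \<in> carrier G" and sigu: "\<sigma> u = 1" and su: "s u = u" and y: "y \<in> carrier G"
  show "u \<otimes> y = y \<otimes> u"
  proof (rule ccontr)
    assume nc: "u \<otimes> y \<noteq> y \<otimes> u"
    note numerals = small_numerals_distinct_if_two_neq_zero[OF two]
    note E1 = grp_alg_normal_coeff[OF N u y m_closed[OF u y]]
    note E2 = grp_alg_normal_coeff[OF N u m_closed[OF u y] m_closed[OF m_closed[OF u y] u]]
    have suy: "s (u \<otimes> y) = s y \<otimes> u" using star_mult[OF u y] su by simp
    have siguy: "\<sigma> (u \<otimes> y) = \<sigma> y" using orientation_mult[OF u y] sigu by simp
    have E1': "(of_int (\<sigma> y) * of_bool (y = s y) :: 'f) = 1 + of_int (\<sigma> y) * of_bool (u \<otimes> y = s y \<otimes> u)"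
      using E1 nc u y su sigu by simp
    show False
    proof (cases "\<sigma> y = 1")
      case True
      have "s y = y" "u \<otimes> y \<noteq> s y \<otimes> u" using E1' True numerals two
        by (auto simp: of_bool_def split: if_splits)
      then show False using E2 nc u y su sigu suy siguy True numerals two
        by (simp add: m_assoc assoc_right_cancel)
    next
      case False
      then have F: "\<sigma> y = -1" using orientation_cases[OF y] by auto
      have "y \<noteq> s y" "u \<otimes> y = s y \<otimes> u" using E1' F numerals two
        by (auto simp: of_bool_def split: if_splits)
      then show False using E2 nc u y su sigu suy siguy F numerals two
        by (simp add: m_assoc assoc_right_cancel)
    qed
  qed
qed

lemma mult_star_central:
  assumes A: fixed_points_central and g: "g \<in> carrier G" and y: "y \<in> carrier G"
  shows "(g \<otimes> s g) \<otimes> y = y \<otimes> (g \<otimes> s g)"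
proof -
  have "s (g \<otimes> s g) = g \<otimes> s g" using star_mult[OF g star_closed[OF g]] g by simp
  then show ?thesis
    using A g y orientation_mult_star[OF g] unfolding fixed_points_central_def by simp
qed

lemma star_mult_commute:
  assumes A: fixed_points_central and g: "g \<in> carrier G"
  shows "s g \<otimes> g = g \<otimes> s g"
proof -
  have "g \<otimes> (s g \<otimes> g) = g \<otimes> (g \<otimes> s g)"
    using mult_star_central[OF A g g] g by (simp add: m_assoc)
  then show ?thesis using g by simp
qed

lemma star_commute_iff:
  assumes A: fixed_points_central and g: "g \<in> carrier G" and y: "y \<in> carrier G"
  shows "s g \<otimes> y = y \<otimes> s g \<longleftrightarrow> g \<otimes> y = y \<otimes> g"
proof -
  have *: "s k \<otimes> y = y \<otimes> s k" if k: "k \<in> carrier G" and c: "k \<otimes> y = y \<otimes> k" for k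
  proof -
    have "(s k \<otimes> y) \<otimes> k = s k \<otimes> (k \<otimes> y)" using k y c by (simp add: m_assoc)
    also have "\<dots> = (k \<otimes> s k) \<otimes> y" using k y star_mult_commute[OF A k] by (simp add: m_assoc[symmetric])
    also have "\<dots> = (y \<otimes> s k) \<otimes> k"
      using mult_star_central[OF A k y] k y star_mult_commute[OF A k] by (simp add: m_assoc)
    finally show ?thesis using k y by simp
  qed
  show ?thesis using *[OF g] *[OF star_closed[OF g]] g by auto
qed

lemma star_swap_iff:
  assumes A: fixed_points_central and g: "g \<in> carrier G" and y: "y \<in> carrier G"
  shows "s g \<otimes> y = y \<otimes> g \<longleftrightarrow> g \<otimes> y = y \<otimes> s g"
proof -
  have *: "s k \<otimes> y = y \<otimes> k" if k: "k \<in> carrier G" and c: "k \<otimes> y = y \<otimes> s k" for k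
  proof -
    have "(s k \<otimes> y) \<otimes> s k = s k \<otimes> (k \<otimes> y)" using k y c by (simp add: m_assoc)
    also have "\<dots> = (k \<otimes> s k) \<otimes> y" using k y star_mult_commute[OF A k] by (simp add: m_assoc[symmetric])
    also have "\<dots> = (y \<otimes> k) \<otimes> s k"
      using mult_star_central[OF A k y] k y by (simp add: m_assoc)
    finally show ?thesis using k y by simp
  qed
  show ?thesis using *[OF g] *[OF star_closed[OF g]] g by auto
qed

lemma star_conj_commute_iff:
  assumes A: fixed_points_central and a: "a \<in> carrier G" and b: "b \<in> carrier G"
  shows "a \<otimes> (b \<otimes> s a) = s a \<otimes> (a \<otimes> b) \<longleftrightarrow> a \<otimes> b = b \<otimes> a"
proof -
  have Z: "s a \<otimes> a = a \<otimes> s a" using star_mult_commute[OF A a] .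
  have "a \<otimes> (b \<otimes> s a) = s a \<otimes> (a \<otimes> b) \<longleftrightarrow> (a \<otimes> (b \<otimes> s a)) \<otimes> a = (s a \<otimes> (a \<otimes> b)) \<otimes> a"
    using a b by simp
  also have "(a \<otimes> (b \<otimes> s a)) \<otimes> a = (a \<otimes> b) \<otimes> (a \<otimes> s a)"
    using a b Z by (simp add: m_assoc)
  also have "(s a \<otimes> (a \<otimes> b)) \<otimes> a = (a \<otimes> s a) \<otimes> (b \<otimes> a)"
    using a b Z by (simp add: m_assoc[symmetric])
  also have "\<dots> = (b \<otimes> a) \<otimes> (a \<otimes> s a)" using mult_star_central[OF A a] a b by simp
  finally show ?thesis using a b by simp
qed

lemma star_conj_swap_iff:
  assumes A: fixed_points_central and a: "a \<in> carrier G" and b: "b \<in> carrier G"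
  shows "a \<otimes> (b \<otimes> s a) = s b \<otimes> (s a \<otimes> a) \<longleftrightarrow> a \<otimes> b = s b \<otimes> a"
proof -
  have Z: "s a \<otimes> a = a \<otimes> s a" using star_mult_commute[OF A a] .
  have "a \<otimes> (b \<otimes> s a) = s b \<otimes> (s a \<otimes> a) \<longleftrightarrow> (a \<otimes> (b \<otimes> s a)) \<otimes> a = (s b \<otimes> (s a \<otimes> a)) \<otimes> a"
    using a b by simp
  also have "(a \<otimes> (b \<otimes> s a)) \<otimes> a = (a \<otimes> b) \<otimes> (a \<otimes> s a)"
    using a b Z by (simp add: m_assoc)
  also have "(s b \<otimes> (s a \<otimes> a)) \<otimes> a = s b \<otimes> ((a \<otimes> s a) \<otimes> a)"
    using a b Z by (simp add: m_assoc)
  also have "\<dots> = (s b \<otimes> a) \<otimes> (a \<otimes> s a)" using mult_star_central[OF A a] a b by (simp add: m_assoc)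
  finally show ?thesis using a b by simp
qed

text \<open>Compare the coefficient of ab in (a + \<sigma>(a)a*)(b + \<sigma>(b)b*) and that of ab a* in
  (a + \<sigma>(a)a*)(ab + \<sigma>(ab)(ab)*) with those of the reversed products; subtracting \<sigma>(a) times
  the first equation from the second leaves this identity.\<close>

lemma sym_commutative_noncommuting_identity:
  assumes C: "sym_commutative G s \<sigma> TYPE('f::field)" and two: "(2::'f) \<noteq> 0"
    and a: "a \<in> carrier G" and b: "b \<in> carrier G" and nc: "a \<otimes> b \<noteq> b \<otimes> a"
  shows "of_bool (a \<otimes> b = b \<otimes> s a) - of_bool (a = s a) = (of_int (\<sigma> a) :: 'f)"
proof -
  have A: fixed_points_central using sym_commutative_fixed_points_central[OF C two] .
  define ea where "ea = (of_int (\<sigma> a) :: 'f)"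
  define eb where "eb = (of_int (\<sigma> b) :: 'f)"
  have eaa: "ea * ea = 1" unfolding ea_def using a by simp
  have eaa2: "of_int (\<sigma> a) * (of_int (\<sigma> a) * X) = (X::'f)" for X
    using eaa unfolding ea_def by (metis mult.assoc mult_1)
  have sym_eqs: "of_bool (b \<otimes> s a = a \<otimes> b) = (of_bool (a \<otimes> b = b \<otimes> s a) :: 'f)"
    "of_bool (s a = a) = (of_bool (a = s a) :: 'f)" by (simp_all only: eq_commute)
  note E1 = sym_commutative_coeff[OF C a b m_closed[OF a b]]
  note E2 = sym_commutative_coeff[OF C a m_closed[OF a b] m_closed[OF m_closed[OF a b] star_closed[OF a]]]
  have E1s: "1 + eb * of_bool (b = s b) + ea * of_bool (a = s a) + ea * eb * of_bool (a \<otimes> b = s a \<otimes> s b) =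
     ea * of_bool (a \<otimes> b = b \<otimes> s a) + eb * of_bool (a \<otimes> b = s b \<otimes> a) + ea * eb * of_bool (a \<otimes> b = s b \<otimes> s a)"
    using E1 nc a b unfolding ea_def eb_def by (simp add: algebra_simps)
  have E2s: "of_bool (a \<otimes> b = b \<otimes> s a) + ea * eb * of_bool (b = s b) + eb * of_bool (a \<otimes> b = s a \<otimes> s b) =
     of_bool (a = s a) + ea + ea * eb * of_bool (a \<otimes> b = s b \<otimes> a) + eb * of_bool (a \<otimes> b = s b \<otimes> s a)"
    using E2 nc a b star_conj_commute_iff[OF A a b] star_conj_swap_iff[OF A a b] star_mult[OF a b]
      orientation_mult[OF a b] eaa2 sym_eqs
    unfolding ea_def eb_def by (simp add: m_assoc assoc_right_cancel algebra_simps)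
  have "2 * (of_bool (a \<otimes> b = b \<otimes> s a) - of_bool (a = s a) - ea) = 0"
    using E1s E2s eaa by algebra
  then have "of_bool (a \<otimes> b = b \<otimes> s a) - of_bool (a = s a) - ea = 0"
    using two mult_eq_0_iff by blast
  then show ?thesis unfolding ea_def by (simp only: right_minus_eq)
qed

lemma sym_commutative_noncommuting_cases:
  assumes C: "sym_commutative G s \<sigma> TYPE('f::field)" and two: "(2::'f) \<noteq> 0"
    and a: "a \<in> carrier G" and b: "b \<in> carrier G" and nc: "a \<otimes> b \<noteq> b \<otimes> a"
  shows "(\<sigma> a = 1 \<and> a \<otimes> b = b \<otimes> s a) \<or> (\<sigma> a = -1 \<and> s a = a)"
  using sym_commutative_noncommuting_identity[OF C two a b nc] orientation_cases[OF a]
    small_numerals_distinct_if_two_neq_zero[OF two] nc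
  by (cases "a \<otimes> b = b \<otimes> s a"; cases "a = s a") auto

lemma grp_alg_normal_noncommuting:
  assumes N: "grp_alg_normal G s \<sigma> TYPE('f::field)" and two: "(2::'f) \<noteq> 0"
    and g: "g \<in> carrier G" and h: "h \<in> carrier G" and nc: "g \<otimes> h \<noteq> h \<otimes> g"
  shows "\<sigma> g = \<sigma> h \<Longrightarrow> g \<otimes> s h = s g \<otimes> h"
    and "\<sigma> g \<noteq> \<sigma> h \<Longrightarrow> h \<otimes> s g = g \<otimes> s h"
proof -
  have A: fixed_points_central using grp_alg_normal_fixed_points_central[OF N two] .
  have n1: "g \<otimes> s h \<noteq> s h \<otimes> g" using star_commute_iff[OF A h g] nc by metis
  have n2: "h \<otimes> s g \<noteq> s g \<otimes> h" using star_commute_iff[OF A g h] nc by metis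
  note numerals = small_numerals_distinct_if_two_neq_zero[OF two]
  note E1 = grp_alg_normal_coeff[OF N g h m_closed[OF g star_closed[OF h]]]
  note E2 = grp_alg_normal_coeff[OF N g h m_closed[OF h star_closed[OF g]]]
  show "g \<otimes> s h = s g \<otimes> h" if "\<sigma> g = \<sigma> h"
    using E1 that n1 numerals orientation_cases[OF g] by (auto simp: of_bool_def split: if_splits)
  show "h \<otimes> s g = g \<otimes> s h" if "\<sigma> g \<noteq> \<sigma> h"
    using E2 that n2 numerals orientation_cases[OF g] orientation_cases[OF h]
    by (auto simp: of_bool_def split: if_splits)
qed

lemma grp_alg_normal_negative_central:
  assumes N: "grp_alg_normal G s \<sigma> TYPE('f::field)" and two: "(2::'f) \<noteq> 0"
    and g: "g \<in> carrier G" and sig: "\<sigma> g = -1" and ns: "s g \<noteq> g" and y: "y \<in> carrier G"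
  shows "g \<otimes> y = y \<otimes> g"
proof (rule ccontr)
  assume nc: "g \<otimes> y \<noteq> y \<otimes> g"
  have A: fixed_points_central using grp_alg_normal_fixed_points_central[OF N two] .
  have Z: "s g \<otimes> g = g \<otimes> s g" using star_mult_commute[OF A g] .
  note noncomm = grp_alg_normal_noncommuting[OF N two g]
  show False
  proof (cases "\<sigma> y = 1")
    case True
    have n1: "y \<otimes> s g = g \<otimes> s y" using noncomm(2)[OF y nc] sig True by simp
    have nc2: "g \<otimes> (g \<otimes> y) \<noteq> (g \<otimes> y) \<otimes> g" using nc g y by (simp add: m_assoc)
    have "\<sigma> (g \<otimes> y) = -1" using orientation_mult[OF g y] sig True by simp
    then have n2: "g \<otimes> s (g \<otimes> y) = s g \<otimes> (g \<otimes> y)" using noncomm(1)[OF m_closed[OF g y] nc2] sig by simp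
    have "(y \<otimes> s g) \<otimes> s g = (g \<otimes> s y) \<otimes> s g" using n1 by simp
    also have "\<dots> = g \<otimes> s (g \<otimes> y)" using star_mult[OF g y] g y by (simp add: m_assoc)
    also have "\<dots> = (s g \<otimes> g) \<otimes> y" using n2 g y by (simp add: m_assoc)
    also have "\<dots> = y \<otimes> (s g \<otimes> g)" using mult_star_central[OF A g y] Z by simp
    finally have "y \<otimes> (s g \<otimes> s g) = y \<otimes> (s g \<otimes> g)" using g y by (simp add: m_assoc)
    then show False using ns g y by simp
  next
    case False
    then have sy: "\<sigma> y = -1" using orientation_cases[OF y] by auto
    have n1: "g \<otimes> s y = s g \<otimes> y" using noncomm(1)[OF y nc] sig sy by simp
    have nc2: "g \<otimes> (y \<otimes> g) \<noteq> (y \<otimes> g) \<otimes> g" using nc g y by (simp add: m_assoc assoc_right_cancel)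
    have "\<sigma> (y \<otimes> g) = 1" using orientation_mult[OF y g] sig sy by simp
    then have n2: "(y \<otimes> g) \<otimes> s g = g \<otimes> s (y \<otimes> g)" using noncomm(2)[OF m_closed[OF y g] nc2] sig by simp
    have "y \<otimes> (g \<otimes> s g) = (g \<otimes> s g) \<otimes> s y" using n2 star_mult[OF y g] g y by (simp add: m_assoc)
    also have "\<dots> = s y \<otimes> (g \<otimes> s g)" using mult_star_central[OF A g star_closed[OF y]] .
    finally have "y = s y" using g y by simp
    then have "g \<otimes> y = s g \<otimes> y" using n1 by simp
    then show False using ns g y by simp
  qed
qed

lemma grp_alg_normal_positive_swap:
  assumes N: "grp_alg_normal G s \<sigma> TYPE('f::field)" and two: "(2::'f) \<noteq> 0"
    and g: "g \<in> carrier G" and sig: "\<sigma> g = 1" and y: "y \<in> carrier G" and nc: "g \<otimes> y \<noteq> y \<otimes> g"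
  shows "g \<otimes> y = y \<otimes> s g"
proof (cases "\<sigma> y = 1")
  case True
  have A: fixed_points_central using grp_alg_normal_fixed_points_central[OF N two] .
  note noncomm = grp_alg_normal_noncommuting[OF N two g]
  have n1: "g \<otimes> s y = s g \<otimes> y" using noncomm(1)[OF y nc] sig True by simp
  have nc2: "g \<otimes> (y \<otimes> g) \<noteq> (y \<otimes> g) \<otimes> g" using nc g y by (simp add: m_assoc assoc_right_cancel)
  have "\<sigma> (y \<otimes> g) = 1" using orientation_mult[OF y g] sig True by simp
  then have n2: "g \<otimes> s (y \<otimes> g) = s g \<otimes> (y \<otimes> g)" using noncomm(1)[OF m_closed[OF y g] nc2] sig by simp
  have "s g \<otimes> (s g \<otimes> y) = s g \<otimes> (g \<otimes> s y)" using n1 by simp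
  also have "\<dots> = (s g \<otimes> g) \<otimes> s y" using g y by (simp add: m_assoc)
  also have "\<dots> = g \<otimes> (s g \<otimes> s y)" using star_mult_commute[OF A g] g y by (simp add: m_assoc)
  also have "\<dots> = s g \<otimes> (y \<otimes> g)" using n2 star_mult[OF y g] by simp
  finally have "s g \<otimes> y = y \<otimes> g" using g y by simp
  then show ?thesis using star_swap_iff[OF A g y] by simp
next
  case False
  then have sy: "\<sigma> y = -1" using orientation_cases[OF y] by auto
  have "s y = y"
    using grp_alg_normal_negative_central[OF N two y sy _ g] nc by auto
  then show ?thesis using grp_alg_normal_noncommuting(2)[OF N two g y nc] sig sy by simp
qed

end

section \<open>The group-theoretic criterion\<close>

context oriented_group begin

definition twisted_commute :: "'a \<Rightarrow> 'a \<Rightarrow> bool" where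
  "twisted_commute g y \<longleftrightarrow>
     g \<otimes> y = y \<otimes> g \<or> (\<sigma> g = 1 \<and> g \<otimes> y = y \<otimes> s g) \<or> (\<sigma> g = -1 \<and> s g = g)"

lemma sym_commutative_twisted_commute:
  assumes "sym_commutative G s \<sigma> TYPE('f::field)" "(2::'f) \<noteq> 0" "g \<in> carrier G" "y \<in> carrier G"
  shows "twisted_commute g y"
  using sym_commutative_noncommuting_cases[OF assms] unfolding twisted_commute_def by blast

lemma grp_alg_normal_twisted_commute:
  assumes N: "grp_alg_normal G s \<sigma> TYPE('f::field)" and two: "(2::'f) \<noteq> 0"
    and g: "g \<in> carrier G" and y: "y \<in> carrier G"
  shows "twisted_commute g y"
  using grp_alg_normal_positive_swap[OF N two g _ y] grp_alg_normal_negative_central[OF N two g _ _ y]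
    orientation_cases[OF g]
  unfolding twisted_commute_def by blast

lemma twisted_commute_class_function:
  assumes T: "\<forall>g\<in>carrier G. \<forall>y\<in>carrier G. twisted_commute g y" and two: "(2::'f::field) \<noteq> 0"
    and sym: "\<And>x. x \<in> carrier G \<Longrightarrow> a x = (of_int (\<sigma> x) * a (s x) :: 'f)"
    and w: "w \<in> carrier G" and y: "y \<in> carrier G"
  shows "a (y \<otimes> w) = a (w \<otimes> y)"
proof -
  define p where "p = y \<otimes> w"
  define q where "q = w \<otimes> y"
  have p: "p \<in> carrier G" and q: "q \<in> carrier G" unfolding p_def q_def using w y by auto
  have pq: "p \<otimes> y = y \<otimes> q" unfolding p_def q_def using w y by (simp add: m_assoc)
  have \<sigma>pq: "\<sigma> p = \<sigma> q" unfolding p_def q_def using orientation_mult w y by (simp add: mult.commute)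
  have vanish: "a z = 0" if z: "z \<in> carrier G" "\<sigma> z = -1" "s z = z" for z
  proof -
    have "2 * a z = 0" using sym[OF z(1)] z by simp
    then show "a z = 0" using two by simp
  qed
  consider "p \<otimes> y = y \<otimes> p" | "\<sigma> p = 1" "p \<otimes> y = y \<otimes> s p" | "\<sigma> p = -1" "s p = p"
    using T p y unfolding twisted_commute_def by blast
  then have "a p = a q"
  proof cases
    case 1
    then show ?thesis using pq p q y by simp
  next
    case 2
    then have "q = s p" using pq p q y by simp
    then show ?thesis using sym[OF p] \<open>\<sigma> p = 1\<close> by simp
  next
    case 3
    have "twisted_commute q y" using T q y by blast
    then consider "q \<otimes> y = y \<otimes> q" | "\<sigma> q = -1" "s q = q"
      using 3 \<sigma>pq unfolding twisted_commute_def by auto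
    then show ?thesis
    proof cases
      case 1
      then have "p \<otimes> y = q \<otimes> y" using pq by simp
      then show ?thesis using p q y by simp
    next
      case 2
      then show ?thesis using vanish[OF q 2] vanish[OF p 3] by simp
    qed
  qed
  then show ?thesis unfolding p_def q_def .
qed

lemma twisted_commute_sym_commutative:
  assumes T: "\<forall>g\<in>carrier G. \<forall>y\<in>carrier G. twisted_commute g y" and two: "(2::'f::field) \<noteq> 0"
  shows "sym_commutative G s \<sigma> TYPE('f)"
  unfolding sym_commutative_def
proof (intro ballI)
  fix a b :: "'a \<Rightarrow> 'f" assume a: "a \<in> sym_elems G s \<sigma>" and b: "b \<in> sym_elems G s \<sigma>"
  then have "a \<in> grp_alg G" "b \<in> grp_alg G" unfolding sym_elems_def by auto
  then show "grp_alg_mult G a b = grp_alg_mult G b a"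
    by (rule grp_alg_mult_comm_class_function)
      (rule twisted_commute_class_function[OF T two sym_elems_apply[OF a]])
qed

text \<open>The symmetric element \<beta> = \<alpha> + \<alpha>\<circledast> is central, so \<alpha>(\<beta> - \<alpha>) = (\<beta> - \<alpha>)\<alpha>.\<close>

lemma twisted_commute_grp_alg_normal:
  assumes T: "\<forall>g\<in>carrier G. \<forall>y\<in>carrier G. twisted_commute g y" and two: "(2::'f::field) \<noteq> 0"
  shows "grp_alg_normal G s \<sigma> TYPE('f)"
  unfolding grp_alg_normal_def
proof (intro ballI)
  fix \<alpha> :: "'a \<Rightarrow> 'f" assume \<alpha>: "\<alpha> \<in> grp_alg G"
  define \<beta> where "\<beta> = (\<lambda>x. \<alpha> x + oriented_inv G s \<sigma> \<alpha> x)"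
  have \<beta>: "\<beta> \<in> grp_alg G"
    unfolding \<beta>_def by (rule grp_alg_add[OF \<alpha> oriented_inv_in_grp_alg[OF \<alpha>]])
  have \<beta>_sym: "\<beta> x = of_int (\<sigma> x) * \<beta> (s x)" if x: "x \<in> carrier G" for x
    using x unfolding \<beta>_def oriented_inv_apply[OF x] oriented_inv_apply[OF star_closed[OF x]]
    by (simp add: algebra_simps mult.assoc[symmetric])
  have comm: "grp_alg_mult G \<alpha> \<beta> = grp_alg_mult G \<beta> \<alpha>"
    by (rule sym, rule grp_alg_mult_comm_class_function[OF \<beta> \<alpha>])
      (rule twisted_commute_class_function[OF T two \<beta>_sym])
  have inv_eq: "oriented_inv G s \<sigma> \<alpha> = (\<lambda>x. \<beta> x - \<alpha> x)" unfolding \<beta>_def by simp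
  show "grp_alg_mult G \<alpha> (oriented_inv G s \<sigma> \<alpha>) = grp_alg_mult G (oriented_inv G s \<sigma> \<alpha>) \<alpha>"
    unfolding inv_eq grp_alg_mult_diff_right grp_alg_mult_diff_left[OF \<beta> \<alpha>] comm ..
qed

end

theorem theorem6:
  fixes G :: "('g, 'b) monoid_scheme" and s :: "'g \<Rightarrow> 'g" and \<sigma> :: "'g \<Rightarrow> int"
  assumes "CHAR('f::field) \<noteq> 2"
    and "group G"
    and "\<not> comm_group G"
    and "group_involution G s"
    and "orientation G \<sigma>"
    and "\<exists>g\<in>carrier G. \<sigma> g \<noteq> 1"
    and "\<forall>g\<in>carrier G. \<sigma> (g \<otimes>\<^bsub>G\<^esub> s g) = 1"
  shows "grp_alg_normal G s \<sigma> TYPE('f) \<longleftrightarrow> sym_commutative G s \<sigma> TYPE('f)"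
proof -
  interpret oriented_group G s \<sigma>
    using assms(2,4,5,7) by (simp add: oriented_group_def oriented_group_axioms_def)
  have two: "(2::'f) \<noteq> 0" using two_neq_zero_if_CHAR_neq_2[OF assms(1)] .
  show ?thesis
    using grp_alg_normal_twisted_commute[OF _ two] twisted_commute_sym_commutative[OF _ two]
      sym_commutative_twisted_commute[OF _ two] twisted_commute_grp_alg_normal[OF _ two]
    by blast
qed

end
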